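(* Let $\|\cdot\|$ be a strictly convex norm on $\mathbb R^2$ that is $C^1$ on $\mathbb R^2\setminus\{0\}$. Given $\xi=\gamma(\theta_0)\in\partial\mathsf B$, define $\Phi^\xi:\partial\mathsf B\to\mathbb R^2$ by \[\Phi^\xi(z)=\mathbf 1_{z\cdot i\gamma(\theta_0)>0}\,\gamma'(\theta_0)=\mathbf 1_{z\cdot i\xi>0}\,i\,n_{\mathsf B}(\xi).\] Then there exists a uniformly bounded family $\{\Phi^\xi_\delta\}_{\delta>0}\subset\mathrm{ENT}$ such that $\Phi^\xi_\delta(z)\to\Phi^\xi(z)$ as $\delta\to0$ for every $z\in\partial\mathsf B$.
   Context: $\mathsf B=\{\|z\|<1\}$ normalized so that $\partial\mathsf B$ has length $2\pi$; $\gamma$ is the counterclockwise arc-length parametrization of $\partial\mathsf B$; $n_{\mathsf B}(\xi)$ is the outer unit normal to $\partial\mathsf B$ at $\xi$; $\mathbb R^2\cong\mathbb C$, $i$ is rotation by $\pi/2$. $\mathrm{ENT}=\{\Phi\in C^1(\partial\mathsf B;\mathbb R^2):\frac{d}{d\theta}\Phi(\gamma(\theta))=\lambda_\Phi(\theta)\gamma'(\theta)$ for some $\lambda_\Phi\in C^1(\mathbb R/2\pi\mathbb Z)\}$. *)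

theory Defs
  imports "HOL-Analysis.Analysis"
begin

text \<open>R^2 is identified with the complex plane; i is multiplication by the imaginary unit.\<close>

definition is_norm_on_plane :: "(complex \<Rightarrow> real) \<Rightarrow> bool" where
  "is_norm_on_plane N \<longleftrightarrow>
     (\<forall>x. N x = 0 \<longleftrightarrow> x = 0) \<and>
     (\<forall>x y. N (x + y) \<le> N x + N y) \<and>
     (\<forall>(c::real) x. N (c *\<^sub>R x) = \<bar>c\<bar> * N x)"

definition strictly_convex_norm :: "(complex \<Rightarrow> real) \<Rightarrow> bool" where
  "strictly_convex_norm N \<longleftrightarrow> is_norm_on_plane N \<and>
     (\<forall>x y. N x = 1 \<longrightarrow> N y = 1 \<longrightarrow> x \<noteq> y \<longrightarrow> N ((1/2) *\<^sub>R (x + y)) < 1)"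

definition C1_away_from_origin :: "(complex \<Rightarrow> real) \<Rightarrow> bool" where
  "C1_away_from_origin N \<longleftrightarrow>
     (\<exists>g :: complex \<Rightarrow> complex.
        (\<forall>x. x \<noteq> 0 \<longrightarrow> (N has_derivative (\<lambda>h. g x \<bullet> h)) (at x)) \<and>
        continuous_on (- {0}) g)"

definition ENT :: "(real \<Rightarrow> complex) \<Rightarrow> (complex \<Rightarrow> complex) set" where
  "ENT \<gamma> = {\<Phi>. \<exists>lam :: real \<Rightarrow> real.
      (\<forall>\<theta>. lam (\<theta> + 2 * pi) = lam \<theta>) \<and>
      (\<exists>lam'. (\<forall>\<theta>. (lam has_real_derivative lam' \<theta>) (at \<theta>)) \<and> continuous_on UNIV lam') \<and>
      (\<forall>\<theta>. ((\<lambda>t. \<Phi> (\<gamma> t)) has_vector_derivative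
               (lam \<theta> *\<^sub>R vector_derivative \<gamma> (at \<theta>))) (at \<theta>))}"

definition Phi_xi :: "(real \<Rightarrow> complex) \<Rightarrow> real \<Rightarrow> complex \<Rightarrow> complex" where
  "Phi_xi \<gamma> \<theta>0 z = (if z \<bullet> (\<i> * \<gamma> \<theta>0) > 0 then vector_derivative \<gamma> (at \<theta>0) else 0)"

end

theory Submission
  imports Defs
begin

text \<open>
  Integrating \<open>\<lambda> \<gamma>'\<close> along the curve from \<open>\<xi> = \<gamma> \<theta>0\<close> gives a field \<open>\<Phi>\<close> on the
  unit sphere with \<open>(\<Phi> \<circ> \<gamma>)' = \<lambda> \<gamma>'\<close>, well defined as soon as \<open>\<integral> \<lambda> \<gamma>'\<close> vanishes over a period.
  Let \<open>\<theta>1\<close> be the parameter of \<open>-\<xi>\<close>; by central symmetry of the sphere \<open>\<gamma>' \<theta>1 = - \<gamma>' \<theta>0\<close>.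
  Take for \<open>\<lambda>\<^sub>\<delta>\<close> a bump of mass one and width \<open>\<delta>\<close> just after \<open>\<theta>0\<close>, another one just before
  \<open>\<theta>1\<close>, and a correction cancelling the total moment: a combination of two fixed bumps with
  linearly independent moments. The moments of the two narrow bumps tend to \<open>\<gamma>' \<theta>0\<close> and
  \<open>-\<gamma>' \<theta>0\<close>, so the correction tends to zero, and \<open>\<Phi>\<^sub>\<delta> (\<gamma> \<theta>)\<close> tends to \<open>\<gamma>' \<theta>0\<close> on the open
  arc from \<open>\<xi>\<close> to \<open>-\<xi>\<close> and to \<open>0\<close> elsewhere. This arc is exactly where \<open>z \<bullet> \<i>\<xi> > 0\<close>.
\<close>

section \<open>Periodic functions on the line\<close>

lemma ex_int_shift_in_period:
  fixes p :: real
  assumes "p > 0"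
  shows "\<exists>k::int. x + of_int k * p \<in> {a..<a + p}"
proof
  let ?k = "\<lceil>(a - x) / p\<rceil>"
  have "(a - x) / p \<le> of_int ?k" "of_int ?k - 1 < (a - x) / p"
    by linarith+
  then have "a - x \<le> of_int ?k * p" "(of_int ?k - 1) * p < a - x"
    using assms by (simp_all only: pos_divide_le_eq pos_less_divide_eq)
  then show "x + of_int ?k * p \<in> {a..<a + p}"
    by (simp add: algebra_simps)
qed

lemma int_shift_in_period_unique:
  fixes p :: real
  assumes "p > 0" "x \<in> {a..<a + p}" "x + of_int k * p \<in> {a..<a + p}"
  shows "k = 0"
proof -
  have "\<bar>of_int k * p\<bar> < 1 * p"
    using assms by auto
  then have "\<bar>of_int k\<bar> < (1::real)"
    using assms(1) by (simp add: abs_mult)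
  then show ?thesis
    by linarith
qed

lemma integral_periodic_interval:
  fixes f :: "real \<Rightarrow> 'a::euclidean_space"
  assumes cont: "continuous_on UNIV f" and per: "\<And>x. f (x + p) = f x" and "p > 0"
  shows "integral {a..a + p} f = integral {b..b + p} f"
proof -
  interpret periodic_fun_simple f p
    by standard (rule per)
  have int: "f integrable_on {x..y}" for x y
    by (rule integrable_continuous_interval[OF continuous_on_subset[OF cont]]) simp
  obtain k :: int where k: "b + of_int k * p \<in> {a..<a + p}"
    using ex_int_shift_in_period[OF \<open>p > 0\<close>] by blast
  define c where "c = b + of_int k * p"
  have "(\<lambda>x. f (x + of_int k * p)) = f"
    by (simp add: fun_eq_iff plus_of_int)
  then have "integral {b..b + p} f = integral {c..c + p} f"
    using integral_shift_real_ivl[of "c" "of_int k * p" "c + p" f] by (simp add: c_def)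
  also have "\<dots> = integral {c..a + p} f + integral {a + p..c + p} f"
    using k Henstock_Kurzweil_Integration.integral_combine[OF _ _ int, of c "a + p" "c + p"]
    by (simp add: c_def)
  also have "integral {a + p..c + p} f = integral {a..c} f"
    using integral_shift_real_ivl[of "a + p" p "c + p" f] by (simp add: per)
  also have "integral {c..a + p} f + integral {a..c} f = integral {a..a + p} f"
    using k Henstock_Kurzweil_Integration.integral_combine[OF _ _ int, of a c "a + p"]
    by (simp add: c_def add.commute)
  finally show ?thesis ..
qed

lemma integral_periodic_primitive:
  fixes f :: "real \<Rightarrow> 'a::euclidean_space"
  assumes "continuous_on UNIV f" "\<And>x. f (x + p) = f x" "p > 0"
    and "integral {a..a + p} f = 0" "a \<le> t"
  shows "integral {a..t + p} f = integral {a..t} f"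
proof -
  have "integral {a..t + p} f = integral {a..t} f + integral {t..t + p} f"
    using assms by (intro Henstock_Kurzweil_Integration.integral_combine[symmetric]
        integrable_continuous_interval continuous_on_subset[OF assms(1)]) auto
  also have "integral {t..t + p} f = 0"
    using integral_periodic_interval[where f = f and p = p and a = a and b = t, OF assms(1-3)] assms(4) by simp
  finally show ?thesis by simp
qed

lemma periodic_has_vector_derivative:
  fixes g :: "real \<Rightarrow> 'a::real_normed_vector"
  assumes "p > 0" "\<And>x. g (x + p) = g x" "\<And>x. f (x + p) = f x"
    and "\<And>x. a < x \<Longrightarrow> (g has_vector_derivative f x) (at x)"
  shows "(g has_vector_derivative f x) (at x)"
proof -
  interpret g: periodic_fun_simple g p by standard (rule assms(2))
  interpret f: periodic_fun_simple f p by standard (rule assms(3))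
  obtain n :: nat where n: "a < x + of_nat n * p"
    using reals_Archimedean3[OF \<open>p > 0\<close>, rule_format, of "a - x"] by (auto simp: algebra_simps)
  have "((g \<circ> (\<lambda>y. y + of_nat n * p)) has_vector_derivative f (x + of_nat n * p)) (at x)"
    by (rule vector_diff_chain_at[of "\<lambda>y. y + of_nat n * p" 1 x g, OF _ assms(4)[OF n], simplified])
       (auto intro!: derivative_eq_intros simp: has_vector_derivative_def)
  moreover have "g \<circ> (\<lambda>y. y + of_nat n * p) = g"
    by (simp add: fun_eq_iff g.plus_of_nat)
  ultimately show ?thesis
    by (simp add: f.plus_of_nat)
qed

lemma bij_betw_periodic_interval:
  fixes g :: "real \<Rightarrow> 'a"
  assumes "p > 0" "\<And>x. g (x + p) = g x" "bij_betw g {0..<p} S"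
  shows "bij_betw g {a..<a + p} S"
proof -
  interpret periodic_fun_simple g p by standard (rule assms(2))
  have "inj_on g {a..<a + p}"
  proof
    fix x y assume xy: "x \<in> {a..<a + p}" "y \<in> {a..<a + p}" "g x = g y"
    obtain k l :: int where "x + of_int k * p \<in> {0..<0 + p}" "y + of_int l * p \<in> {0..<0 + p}"
      using ex_int_shift_in_period[OF assms(1)] by metis
    moreover have "g (x + of_int k * p) = g (y + of_int l * p)"
      using xy by (simp add: plus_of_int)
    ultimately have "x + of_int k * p = y + of_int l * p"
      using bij_betw_imp_inj_on[OF assms(3)] by (auto simp: inj_on_def)
    then have "y + of_int (l - k) * p = x"
      by (simp add: algebra_simps)
    then show "x = y"
      using int_shift_in_period_unique[OF assms(1), of y a "l - k"] xy by auto
  qed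
  moreover have "g ` {a..<a + p} = S"
  proof safe
    fix x assume "x \<in> {a..<a + p}"
    obtain k :: int where "x + of_int k * p \<in> {0..<0 + p}"
      using ex_int_shift_in_period[OF assms(1)] by blast
    then show "g x \<in> S"
      using bij_betw_apply[OF assms(3)] by (metis add_0 plus_of_int)
  next
    fix z assume "z \<in> S"
    then obtain y where y: "y \<in> {0..<p}" "z = g y"
      using bij_betw_imp_surj_on[OF assms(3)] by blast
    obtain k :: int where "y + of_int k * p \<in> {a..<a + p}"
      using ex_int_shift_in_period[OF assms(1)] by blast
    then show "z \<in> g ` {a..<a + p}"
      using y by (metis image_eqI plus_of_int)
  qed
  ultimately show ?thesis
    by (simp add: bij_betw_def)
qed

section \<open>Smooth periodic bumps\<close>

definition C1_periodic :: "(real \<Rightarrow> real) \<Rightarrow> bool" where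
  "C1_periodic u \<longleftrightarrow> (\<forall>\<theta>. u (\<theta> + 2 * pi) = u \<theta>) \<and>
     (\<exists>u'. (\<forall>\<theta>. (u has_real_derivative u' \<theta>) (at \<theta>)) \<and> continuous_on UNIV u')"

lemma C1_periodic_add:
  assumes "C1_periodic u" "C1_periodic v"
  shows "C1_periodic (\<lambda>t. u t + v t)"
proof -
  obtain u' v' where "\<And>\<theta>. (u has_real_derivative u' \<theta>) (at \<theta>)" "continuous_on UNIV u'"
    "\<And>\<theta>. (v has_real_derivative v' \<theta>) (at \<theta>)" "continuous_on UNIV v'"
    using assms by (auto simp: C1_periodic_def)
  moreover have "\<And>\<theta>. u (\<theta> + 2 * pi) = u \<theta>" "\<And>\<theta>. v (\<theta> + 2 * pi) = v \<theta>"
    using assms by (simp_all add: C1_periodic_def)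
  ultimately show ?thesis
    unfolding C1_periodic_def
    by (intro conjI allI exI[of _ "\<lambda>t. u' t + v' t"] DERIV_add continuous_on_add) simp_all
qed

lemma C1_periodic_cmult:
  assumes "C1_periodic u"
  shows "C1_periodic (\<lambda>t. c * u t)"
proof -
  obtain u' where "\<And>\<theta>. (u has_real_derivative u' \<theta>) (at \<theta>)" "continuous_on UNIV u'"
    using assms by (auto simp: C1_periodic_def)
  moreover have "\<And>\<theta>. u (\<theta> + 2 * pi) = u \<theta>"
    using assms by (simp add: C1_periodic_def)
  ultimately show ?thesis
    unfolding C1_periodic_def
    by (intro conjI allI exI[of _ "\<lambda>t. c * u' t"] DERIV_cmult continuous_on_mult_left) simp_all
qed

lemma C1_periodic_continuous: "C1_periodic u \<Longrightarrow> continuous_on UNIV u"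
  unfolding C1_periodic_def
  by (metis DERIV_isCont continuous_at_imp_continuous_on)

lemma has_real_derivative_max0_power2:
  "((\<lambda>y::real. (max 0 y)\<^sup>2) has_real_derivative 2 * max 0 x) (at x)"
proof (cases x "0::real" rule: linorder_cases)
  case less
  have "((\<lambda>y. 0) has_real_derivative 2 * max 0 x) (at x)"
    using less by simp
  then show ?thesis
    by (rule has_field_derivative_transform_within_open[of _ _ _ "{..<0}"]) (use less in auto)
next
  case greater
  have "((\<lambda>y. y\<^sup>2) has_real_derivative 2 * max 0 x) (at x)"
    using greater by (auto intro!: derivative_eq_intros)
  then show ?thesis
    by (rule has_field_derivative_transform_within_open[of _ _ _ "{0<..}"]) (use greater in auto)
next
  case equal
  have "((\<lambda>y::real. (max 0 y)\<^sup>2 / y) \<longlongrightarrow> 0) (at 0)"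
  proof (rule Lim_null_comparison[where g = "\<lambda>y. \<bar>y\<bar>"])
    show "\<forall>\<^sub>F y in at 0. norm ((max 0 y)\<^sup>2 / y) \<le> \<bar>y\<bar>"
      by (auto simp: power2_eq_square abs_mult max_def divide_le_eq intro!: always_eventually)
    show "((\<lambda>y::real. \<bar>y\<bar>) \<longlongrightarrow> 0) (at 0)"
      by (auto intro!: tendsto_eq_intros)
  qed
  then show ?thesis
    using equal by (simp add: has_field_derivative_iff)
qed

definition bump :: "real \<Rightarrow> real \<Rightarrow> real" where
  "bump e x = (max 0 (cos x - cos e))\<^sup>2"

lemma bump_nonneg: "0 \<le> bump e x"
  by (simp add: bump_def)

lemma bump_periodic: "bump e (x + 2 * pi) = bump e x"
  by (simp add: bump_def)

lemma has_real_derivative_bump: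
  "(bump e has_real_derivative 2 * max 0 (cos x - cos e) * - sin x) (at x)"
  unfolding bump_def[abs_def]
  by (rule DERIV_chain2[OF has_real_derivative_max0_power2]) (auto intro!: derivative_eq_intros)

lemma continuous_on_bump: "continuous_on S (bump e)"
  unfolding bump_def[abs_def] by (intro continuous_intros)

lemma bump_eq_0:
  assumes "0 \<le> e" "e \<le> \<bar>x\<bar>" "\<bar>x\<bar> \<le> 2 * pi - e"
  shows "bump e x = 0"
proof -
  have "cos x \<le> cos e"
  proof (cases "\<bar>x\<bar> \<le> pi")
    case True
    then show ?thesis
      using assms cos_monotone_0_pi_le[of e "\<bar>x\<bar>"] by simp
  next
    case False
    have "cos x = cos (2 * pi - \<bar>x\<bar>)"
      by simp
    also have "\<dots> \<le> cos e"
      using assms False by (intro cos_monotone_0_pi_le) auto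
    finally show ?thesis .
  qed
  then show ?thesis
    by (simp add: bump_def)
qed

lemma integral_bump_pos:
  assumes "0 < e" "e \<le> pi"
  shows "0 < integral {-pi..pi} (bump e)"
proof -
  have "0 < bump e 0"
    using assms cos_monotone_0_pi[of 0 e] by (simp add: bump_def)
  then have "integral {-pi..pi} (bump e) \<noteq> 0"
    using integral_eq_0_iff[OF continuous_on_bump, of "-pi" pi e] bump_nonneg by force
  moreover have "0 \<le> integral {-pi..pi} (bump e)"
    by (intro integral_nonneg bump_nonneg integrable_continuous_interval continuous_on_bump)
  ultimately show ?thesis
    by linarith
qed

definition bump_density :: "real \<Rightarrow> real \<Rightarrow> real \<Rightarrow> real" where
  "bump_density e c t = bump e (t - c) / integral {-pi..pi} (bump e)"

lemma bump_density_nonneg: "0 \<le> bump_density e c t"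
  unfolding bump_density_def
  by (intro divide_nonneg_nonneg bump_nonneg integral_nonneg
      integrable_continuous_interval continuous_on_bump)

lemma bump_density_eq_0:
  "0 \<le> e \<Longrightarrow> e \<le> \<bar>t - c\<bar> \<Longrightarrow> \<bar>t - c\<bar> \<le> 2 * pi - e \<Longrightarrow> bump_density e c t = 0"
  by (simp add: bump_density_def bump_eq_0)

lemma C1_periodic_bump_density: "C1_periodic (bump_density e c)"
  unfolding C1_periodic_def
proof (intro conjI allI exI)
  let ?Z = "integral {-pi..pi} (bump e)"
  show "bump_density e c (\<theta> + 2 * pi) = bump_density e c \<theta>" for \<theta>
    using bump_periodic[of e "\<theta> - c"] by (simp add: bump_density_def algebra_simps)
  show "(bump_density e c has_real_derivative
      2 * max 0 (cos (\<theta> - c) - cos e) * - sin (\<theta> - c) / ?Z) (at \<theta>)" for \<theta>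
  proof -
    have "((\<lambda>t. bump e (t - c)) has_real_derivative
        2 * max 0 (cos (\<theta> - c) - cos e) * - sin (\<theta> - c) * 1) (at \<theta>)"
      by (rule DERIV_chain2[OF has_real_derivative_bump]) (auto intro!: derivative_eq_intros)
    then show ?thesis
      unfolding bump_density_def[abs_def] by (intro DERIV_cdivide) simp
  qed
  show "continuous_on UNIV (\<lambda>\<theta>. 2 * max 0 (cos (\<theta> - c) - cos e) * - sin (\<theta> - c) / ?Z)"
    unfolding divide_inverse by (intro continuous_intros)
qed

lemma integral_bump_shift: "integral {a..a + 2 * pi} (\<lambda>t. bump e (t - c)) = integral {-pi..pi} (bump e)"
proof -
  have "integral {a..a + 2 * pi} (\<lambda>t. bump e (t - c)) = integral {a - c..a - c + 2 * pi} (bump e)"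
    using integral_shift_real_ivl[of "a - c" "- c" "a - c + 2 * pi" "bump e"] by simp
  also have "\<dots> = integral {-pi..-pi + 2 * pi} (bump e)"
    by (rule integral_periodic_interval[where f = "bump e" and p = "2 * pi", OF continuous_on_bump bump_periodic]) simp
  finally show ?thesis by simp
qed

lemma integral_bump_density:
  assumes "0 < e" "e \<le> pi"
  shows "integral {a..a + 2 * pi} (bump_density e c) = 1"
  using integral_bump_pos[OF assms] integral_bump_shift[of a e c]
  by (simp add: bump_density_def[abs_def])

text \<open>If \<open>cos e = 1\<close>, the normalising integral and hence the density vanish (\<open>x / 0 = 0\<close>).\<close>
lemma integral_bump_density_le: "integral {a..a + 2 * pi} (bump_density e c) \<le> 1"
  using integral_bump_shift[of a e c] by (simp add: bump_density_def[abs_def])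

lemma complex_orthogonal_decomposition:
  fixes x z :: complex
  shows "(x \<bullet> x) *\<^sub>R z = (z \<bullet> x) *\<^sub>R x + (z \<bullet> (\<i> * x)) *\<^sub>R (\<i> * x)"
  by (simp add: complex_eq_iff inner_complex_def algebra_simps)

lemma complex_orthogonal_collinear:
  fixes x z :: complex
  assumes "x \<noteq> 0" "z \<bullet> x = 0"
  shows "z = ((z \<bullet> (\<i> * x)) / (x \<bullet> x)) *\<^sub>R (\<i> * x)"
proof -
  have "x \<bullet> x \<noteq> 0"
    using assms(1) by simp
  then have "z = (1 / (x \<bullet> x)) *\<^sub>R ((x \<bullet> x) *\<^sub>R z)"
    by simp
  then show ?thesis
    using complex_orthogonal_decomposition[of x z] assms(2) by simp
qed

lemma complex_orthogonal_same_norm: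
  fixes g u v :: complex
  assumes "g \<noteq> 0" "u \<bullet> g = 0" "v \<bullet> g = 0" "norm u = norm v"
  shows "v = u \<or> v = - u"
proof -
  obtain a b :: real where u: "u = a *\<^sub>R (\<i> * g)" and v: "v = b *\<^sub>R (\<i> * g)"
    using complex_orthogonal_collinear[OF assms(1)] assms(2,3) by metis
  have "\<bar>b\<bar> = \<bar>a\<bar>"
    using assms(1,4) by (simp add: u v norm_mult)
  then show ?thesis
    by (auto simp: u v abs_eq_iff)
qed

lemma complex_cramer:
  fixes a b w :: complex
  assumes "Im (cnj a * b) \<noteq> 0"
  shows "(Im (cnj w * b) / Im (cnj a * b)) *\<^sub>R a + (Im (cnj a * w) / Im (cnj a * b)) *\<^sub>R b = w"
proof -
  have "Im (cnj w * b) * Re a + Im (cnj a * w) * Re b = Im (cnj a * b) * Re w"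
    "Im (cnj w * b) * Im a + Im (cnj a * w) * Im b = Im (cnj a * b) * Im w"
    by (simp_all add: algebra_simps)
  then show ?thesis
    using assms by (simp add: complex_eq_iff add_divide_distrib[symmetric] divide_simps)
qed

lemma has_derivative_level_curve:
  assumes "(F has_derivative D) (at (g t))" "(g has_vector_derivative v) (at t)"
    and "\<And>s. F (g s) = c"
  shows "D v = 0"
proof -
  have "((F \<circ> g) has_derivative (\<lambda>h. D (h *\<^sub>R v))) (at t)"
    using diff_chain_at[OF assms(2)[unfolded has_vector_derivative_def] assms(1)]
    by (simp add: o_def)
  moreover have "((F \<circ> g) has_derivative (\<lambda>h. 0)) (at t)"
    using assms(3) by (simp add: o_def)
  ultimately have "(\<lambda>h. D (h *\<^sub>R v)) = (\<lambda>h. 0)"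
    by (rule has_derivative_unique)
  then show ?thesis
    by (metis scaleR_one)
qed

lemma has_derivative_positively_homogeneous:
  fixes F :: "'a::real_normed_vector \<Rightarrow> real"
  assumes "(F has_derivative D) (at p)" "\<And>s. s > 0 \<Longrightarrow> F (s *\<^sub>R p) = s * F p"
  shows "D p = F p"
proof -
  have "((\<lambda>s::real. s *\<^sub>R p) has_derivative (\<lambda>h. h *\<^sub>R p)) (at 1)"
    by (rule bounded_linear_imp_has_derivative[OF bounded_linear_scaleR_left])
  then have "((\<lambda>s. F (s *\<^sub>R p)) has_derivative (\<lambda>h. D (h *\<^sub>R p))) (at 1)"
    using diff_chain_at[of "\<lambda>s. s *\<^sub>R p" _ 1 F D] assms(1) by (simp add: o_def)
  moreover have "(\<lambda>h. D (h *\<^sub>R p)) = (*) (D p)"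
    using linear_cmul[OF has_derivative_linear[OF assms(1)]] by (auto simp: fun_eq_iff)
  ultimately have "((\<lambda>s. F (s *\<^sub>R p)) has_real_derivative D p) (at 1)"
    by (simp add: has_field_derivative_def)
  moreover have "((\<lambda>s. F (s *\<^sub>R p)) has_real_derivative F p) (at 1)"
    by (rule has_field_derivative_transform_within_open[of "\<lambda>s. s * F p" _ _ "{0<..}"])
       (auto intro!: derivative_eq_intros simp: assms(2))
  ultimately show ?thesis
    by (rule DERIV_unique)
qed

lemma positive_after_simple_zero:
  fixes h :: "real \<Rightarrow> real"
  assumes "h a = 0" "(h has_real_derivative D) (at a)" "D > 0" "continuous_on {a..b} h"
    and "\<And>t. a < t \<Longrightarrow> t < b \<Longrightarrow> h t \<noteq> 0" "a < t" "t < b"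
  shows "h t > 0"
proof (rule ccontr)
  assume "\<not> h t > 0"
  obtain d where "d > 0" and d: "\<And>s. 0 < s \<Longrightarrow> s < d \<Longrightarrow> h a < h (a + s)"
    using DERIV_pos_inc_right[OF assms(2,3)] by blast
  define s where "s = min (d / 2) (t - a)"
  have "0 < s" "s < d" "a + s \<le> t"
    using \<open>d > 0\<close> assms(6) by (auto simp: s_def)
  then have "0 < h (a + s)"
    using d assms(1) by fastforce
  moreover have "continuous_on {a + s..t} h"
    using \<open>0 < s\<close> assms(7) by (intro continuous_on_subset[OF assms(4)]) auto
  ultimately obtain x where "a + s \<le> x" "x \<le> t" "h x = 0"
    using IVT2'[of h t 0 "a + s"] \<open>\<not> h t > 0\<close> \<open>a + s \<le> t\<close> by force
  then show False
    using assms(5)[of x] \<open>0 < s\<close> assms(7) by auto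
qed

lemma norm_integral_weighted_le:
  fixes f :: "real \<Rightarrow> 'a::euclidean_space"
  assumes "continuous_on {a..b} w" "continuous_on {a..b} f"
    and "\<And>t. t \<in> {a..b} \<Longrightarrow> 0 \<le> w t \<and> norm (f t) \<le> 1" "s \<le> b"
  shows "norm (integral {a..s} (\<lambda>t. w t *\<^sub>R f t)) \<le> integral {a..b} w"
proof -
  have int: "w integrable_on {a..b}"
    using assms(1) by (rule integrable_continuous_interval)
  have "norm (integral {a..s} (\<lambda>t. w t *\<^sub>R f t)) \<le> integral {a..s} w"
  proof (rule integral_norm_bound_integral)
    show "(\<lambda>t. w t *\<^sub>R f t) integrable_on {a..s}"
      using assms by (intro integrable_continuous_interval continuous_on_scaleR)
        (auto elim: continuous_on_subset)
    show "w integrable_on {a..s}"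
      by (rule integrable_on_subinterval[OF int]) (use assms in auto)
    show "norm (w t *\<^sub>R f t) \<le> w t" if "t \<in> {a..s}" for t
      using assms(3)[of t] that assms(4) mult_left_le[of "norm (f t)" "w t"] by auto
  qed
  also have "\<dots> \<le> integral {a..b} w"
    using assms(3,4) by (intro integral_subset_le integrable_on_subinterval[OF int]) auto
  finally show ?thesis .
qed

lemma integral_weighted_average_close:
  fixes f :: "real \<Rightarrow> 'a::euclidean_space"
  assumes "continuous_on {a..b} w" "continuous_on {a..b} f"
    and "\<And>t. t \<in> {a..b} \<Longrightarrow> 0 \<le> w t" "integral {a..b} w = 1"
    and "\<And>t. t \<in> {a..b} \<Longrightarrow> w t \<noteq> 0 \<Longrightarrow> norm (f t - y) \<le> \<epsilon>"
  shows "norm (integral {a..b} (\<lambda>t. w t *\<^sub>R f t) - y) \<le> \<epsilon>"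
proof -
  have intw: "w integrable_on {a..b}"
    using assms(1) by (rule integrable_continuous_interval)
  have intwf: "(\<lambda>t. w t *\<^sub>R f t) integrable_on {a..b}"
    using assms by (intro integrable_continuous_interval continuous_intros)
  have wy: "((\<lambda>t. w t *\<^sub>R y) has_integral y) {a..b}"
    using has_integral_scaleR_left[OF integrable_integral[OF intw], of y] assms(4) by simp
  have intf: "(\<lambda>t. w t *\<^sub>R (f t - y)) integrable_on {a..b}"
    using integrable_diff[OF intwf has_integral_integrable[OF wy]] by (simp add: scaleR_diff_right)
  have "integral {a..b} (\<lambda>t. w t *\<^sub>R f t) - y = integral {a..b} (\<lambda>t. w t *\<^sub>R (f t - y))"
    using integral_diff[OF intwf has_integral_integrable[OF wy]] integral_unique[OF wy]
    by (simp add: scaleR_diff_right)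
  also have "norm \<dots> \<le> integral {a..b} (\<lambda>t. w t * \<epsilon>)"
  proof (intro integral_norm_bound_integral integrable_on_mult_left intf intw)
    show "norm (w t *\<^sub>R (f t - y)) \<le> w t * \<epsilon>" if "t \<in> {a..b}" for t
      using assms(3,5)[OF that] by (cases "w t = 0") (auto intro: mult_left_mono)
  qed
  also have "\<dots> = \<epsilon>"
    using assms(4) by simp
  finally show ?thesis .
qed

section \<open>Unit-speed parametrisations of the unit sphere\<close>

locale sphere_curve =
  fixes N :: "complex \<Rightarrow> real" and \<gamma> :: "real \<Rightarrow> complex" and \<theta>0 :: real
  assumes N_norm: "is_norm_on_plane N"
    and C1: "C1_away_from_origin N"
    and \<gamma>_diff: "\<forall>\<theta>. \<gamma> differentiable (at \<theta>)"
    and \<gamma>_C1: "continuous_on UNIV (\<lambda>\<theta>. vector_derivative \<gamma> (at \<theta>))"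
    and \<gamma>_arclength: "\<forall>\<theta>. norm (vector_derivative \<gamma> (at \<theta>)) = 1"
    and \<gamma>_periodic: "\<forall>\<theta>. \<gamma> (\<theta> + 2 * pi) = \<gamma> \<theta>"
    and \<gamma>_bij: "bij_betw \<gamma> {0..<2 * pi} {z. N z = 1}"
    and \<gamma>_ccw: "\<forall>\<theta>. Im (cnj (\<gamma> \<theta>) * vector_derivative \<gamma> (at \<theta>)) > 0"
begin

abbreviation \<gamma>' :: "real \<Rightarrow> complex" where
  "\<gamma>' t \<equiv> vector_derivative \<gamma> (at t)"

abbreviation \<xi> :: complex where
  "\<xi> \<equiv> \<gamma> \<theta>0"

lemma N_scaleR: "N (c *\<^sub>R x) = \<bar>c\<bar> * N x"
  using N_norm by (simp add: is_norm_on_plane_def)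

lemma N_eq_0_iff: "N x = 0 \<longleftrightarrow> x = 0"
  using N_norm by (simp add: is_norm_on_plane_def)

lemma N_minus: "N (- x) = N x"
  using N_scaleR[of "-1" x] by simp

lemma N_triangle: "N (x + y) \<le> N x + N y"
  using N_norm by (simp add: is_norm_on_plane_def)

lemma N_pos:
  assumes "x \<noteq> 0"
  shows "0 < N x"
proof -
  have "N 0 = 0" "N x \<noteq> 0"
    using N_eq_0_iff assms by auto
  then show ?thesis
    using N_triangle[of x "- x"] N_minus[of x] by simp
qed

interpretation \<gamma>: periodic_fun_simple \<gamma> "2 * pi"
  by standard (use \<gamma>_periodic in auto)

lemma has_vector_derivative_\<gamma>: "(\<gamma> has_vector_derivative \<gamma>' t) (at t)"
  using \<gamma>_diff vector_derivative_works by blast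

lemma \<gamma>'_periodic: "\<gamma>' (t + 2 * pi) = \<gamma>' t"
proof -
  have "((\<lambda>s. s + 2 * pi) has_vector_derivative 1) (at t)"
    by (auto intro!: derivative_eq_intros simp: has_vector_derivative_def)
  from vector_diff_chain_at[OF this has_vector_derivative_\<gamma>]
  have "((\<gamma> \<circ> (\<lambda>s. s + 2 * pi)) has_vector_derivative \<gamma>' (t + 2 * pi)) (at t)"
    by simp
  moreover have "\<gamma> \<circ> (\<lambda>s. s + 2 * pi) = \<gamma>"
    by (simp add: fun_eq_iff \<gamma>.plus_period)
  ultimately show ?thesis
    by (simp add: vector_derivative_at)
qed

lemma continuous_on_\<gamma>': "continuous_on S \<gamma>'"
  using \<gamma>_C1 continuous_on_subset by blast

lemma bij_betw_\<gamma>: "bij_betw \<gamma> {a..<a + 2 * pi} {z. N z = 1}"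
  by (rule bij_betw_periodic_interval[OF _ \<gamma>.plus_period \<gamma>_bij]) simp

lemma N_\<gamma>: "N (\<gamma> t) = 1"
  using bij_betwE[OF bij_betw_\<gamma>[of t]] by simp

lemma \<gamma>_nonzero: "\<gamma> t \<noteq> 0"
  using N_\<gamma>[of t] N_eq_0_iff[of 0] by auto

definition param :: "complex \<Rightarrow> real" where
  "param = the_inv_into {\<theta>0..<\<theta>0 + 2 * pi} \<gamma>"

lemma param: "N z = 1 \<Longrightarrow> param z \<in> {\<theta>0..<\<theta>0 + 2 * pi} \<and> \<gamma> (param z) = z"
  unfolding param_def
  using bij_betwE[OF bij_betw_the_inv_into[OF bij_betw_\<gamma>[of \<theta>0]]]
    f_the_inv_into_f_bij_betw[OF bij_betw_\<gamma>[of \<theta>0]]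
  by auto

lemma param_\<gamma>: "t \<in> {\<theta>0..<\<theta>0 + 2 * pi} \<Longrightarrow> param (\<gamma> t) = t"
  unfolding param_def using bij_betw_\<gamma>[of \<theta>0]
  by (simp add: bij_betw_def the_inv_into_f_f)

lemma continuous_on_\<gamma>: "continuous_on S \<gamma>"
  using \<gamma>_diff by (meson continuous_at_imp_continuous_on differentiable_imp_continuous_within)

lemma has_real_derivative_inner_\<gamma>: "((\<lambda>s. \<gamma> s \<bullet> w) has_real_derivative \<gamma>' t \<bullet> w) (at t)"
  using has_derivative_inner_left[OF has_vector_derivative_\<gamma>[unfolded has_vector_derivative_def]]
  by (simp add: has_real_derivative_iff_has_vector_derivative has_vector_derivative_def)

definition \<theta>1 :: real where
  "\<theta>1 = param (- \<xi>)"

lemma \<theta>1: "\<theta>0 < \<theta>1" "\<theta>1 < \<theta>0 + 2 * pi" "\<gamma> \<theta>1 = - \<xi>"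
proof -
  have "param (- \<xi>) \<in> {\<theta>0..<\<theta>0 + 2 * pi}" "\<gamma> (param (- \<xi>)) = - \<xi>"
    using param[of "- \<xi>"] N_minus N_\<gamma> by auto
  moreover have "- \<xi> \<noteq> \<xi>"
    using \<gamma>_nonzero[of \<theta>0] by (simp add: eq_neg_iff_add_eq_0)
  ultimately show "\<theta>0 < \<theta>1" "\<theta>1 < \<theta>0 + 2 * pi" "\<gamma> \<theta>1 = - \<xi>"
    unfolding \<theta>1_def by (auto simp: order.order_iff_strict)
qed

text \<open>The tangents at \<open>\<xi>\<close> and \<open>-\<xi>\<close> are both orthogonal to the gradient of \<open>N\<close> at \<open>-\<xi>\<close>,
  which is nonzero by Euler's identity; the orientation picks the sign.\<close>
lemma \<gamma>'_antipode: "\<gamma>' \<theta>1 = - \<gamma>' \<theta>0"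
proof -
  obtain G where G: "\<And>x. x \<noteq> 0 \<Longrightarrow> (N has_derivative (\<lambda>h. G x \<bullet> h)) (at x)"
    using C1 unfolding C1_away_from_origin_def by blast
  define g where "g = G (- \<xi>)"
  have g: "(N has_derivative (\<lambda>h. g \<bullet> h)) (at (- \<xi>))"
    unfolding g_def using G \<gamma>_nonzero[of \<theta>0] by simp
  have "g \<bullet> \<gamma>' \<theta>1 = 0"
    by (rule has_derivative_level_curve[where F = N and c = 1, OF _ has_vector_derivative_\<gamma> N_\<gamma>])
      (use g \<theta>1(3) in simp)
  moreover have "g \<bullet> - \<gamma>' \<theta>0 = 0"
    by (rule has_derivative_level_curve[where g = "\<lambda>s. - \<gamma> s" and c = 1, OF g
          has_vector_derivative_minus[OF has_vector_derivative_\<gamma>]])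
      (simp add: N_minus N_\<gamma>)
  moreover have "g \<bullet> - \<xi> = 1"
    using has_derivative_positively_homogeneous[OF g] by (simp add: N_scaleR N_minus N_\<gamma>)
  then have "g \<noteq> 0"
    by auto
  ultimately have "\<gamma>' \<theta>1 = - \<gamma>' \<theta>0 \<or> \<gamma>' \<theta>1 = \<gamma>' \<theta>0"
    using complex_orthogonal_same_norm[of g "- \<gamma>' \<theta>0" "\<gamma>' \<theta>1"] \<gamma>_arclength
    by (simp add: inner_commute)
  moreover have "Im (cnj \<xi> * \<gamma>' \<theta>0) > 0" "Im (cnj (\<gamma> \<theta>1) * \<gamma>' \<theta>1) > 0"
    using \<gamma>_ccw by blast+
  ultimately show ?thesis
    using \<theta>1(3) by auto
qed

lemma inner_\<gamma>_rot_eq_0: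
  assumes "\<gamma> t \<bullet> (\<i> * \<xi>) = 0"
  shows "\<gamma> t = \<xi> \<or> \<gamma> t = - \<xi>"
proof -
  define c where "c = (\<gamma> t \<bullet> (\<i> * (\<i> * \<xi>))) / ((\<i> * \<xi>) \<bullet> (\<i> * \<xi>))"
  have "\<gamma> t = (- c) *\<^sub>R \<xi>"
    using complex_orthogonal_collinear[of "\<i> * \<xi>" "\<gamma> t"] assms \<gamma>_nonzero[of \<theta>0]
    by (simp add: c_def)
  moreover have "\<bar>c\<bar> = 1"
    using N_\<gamma>[of t] N_\<gamma>[of \<theta>0] N_scaleR[of "- c" \<xi>] calculation by simp
  then have "c = 1 \<or> c = -1"
    by linarith
  ultimately show ?thesis
    by auto
qed

lemma inner_\<gamma>_rot_nonzero:
  assumes "\<theta>0 < t" "t < \<theta>0 + 2 * pi" "t \<noteq> \<theta>1"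
  shows "\<gamma> t \<bullet> (\<i> * \<xi>) \<noteq> 0"
proof
  assume "\<gamma> t \<bullet> (\<i> * \<xi>) = 0"
  then have "\<gamma> t = \<gamma> \<theta>0 \<or> \<gamma> t = \<gamma> \<theta>1"
    using inner_\<gamma>_rot_eq_0 \<theta>1(3) by auto
  then have "t = \<theta>0 \<or> t = \<theta>1"
    using param_\<gamma>[of t] param_\<gamma>[of \<theta>0] param_\<gamma>[of \<theta>1] assms \<theta>1 by auto
  then show False
    using assms by auto
qed

lemma inner_\<gamma>_rot_pos:
  assumes "\<theta>0 < t" "t < \<theta>1"
  shows "\<gamma> t \<bullet> (\<i> * \<xi>) > 0"
proof (rule positive_after_simple_zero[OF _ has_real_derivative_inner_\<gamma> _ _ _ assms])
  show "\<gamma>' \<theta>0 \<bullet> (\<i> * \<xi>) > 0"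
    using \<gamma>_ccw by (simp add: inner_complex_def algebra_simps)
  show "\<gamma> s \<bullet> (\<i> * \<xi>) \<noteq> 0" if "\<theta>0 < s" "s < \<theta>1" for s
    using inner_\<gamma>_rot_nonzero[of s] that \<theta>1 by auto
  show "continuous_on {\<theta>0..\<theta>1} (\<lambda>s. \<gamma> s \<bullet> (\<i> * \<xi>))"
    by (intro continuous_intros continuous_on_\<gamma>)
qed (simp add: inner_complex_def)

lemma inner_\<gamma>_rot_neg:
  assumes "\<theta>1 < t" "t < \<theta>0 + 2 * pi"
  shows "\<gamma> t \<bullet> (\<i> * \<xi>) < 0"
proof -
  have "- (\<gamma> t \<bullet> (\<i> * \<xi>)) > 0"
  proof (rule positive_after_simple_zero[OF _ DERIV_minus[OF has_real_derivative_inner_\<gamma>] _ _ _ assms])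
    show "- (\<gamma>' \<theta>1 \<bullet> (\<i> * \<xi>)) > 0"
      using \<gamma>_ccw by (simp add: \<gamma>'_antipode inner_complex_def algebra_simps)
    show "- (\<gamma> s \<bullet> (\<i> * \<xi>)) \<noteq> 0" if "\<theta>1 < s" "s < \<theta>0 + 2 * pi" for s
      using inner_\<gamma>_rot_nonzero[of s] that \<theta>1 by auto
    show "continuous_on {\<theta>1..\<theta>0 + 2 * pi} (\<lambda>s. - (\<gamma> s \<bullet> (\<i> * \<xi>)))"
      by (intro continuous_intros continuous_on_\<gamma>)
  qed (simp add: \<theta>1(3) inner_complex_def)
  then show ?thesis
    by simp
qed

lemma Phi_xi_\<gamma>:
  assumes "t \<in> {\<theta>0..<\<theta>0 + 2 * pi}"
  shows "Phi_xi \<gamma> \<theta>0 (\<gamma> t) = (if \<theta>0 < t \<and> t < \<theta>1 then \<gamma>' \<theta>0 else 0)"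
proof -
  have "\<gamma> t \<bullet> (\<i> * \<xi>) > 0 \<longleftrightarrow> \<theta>0 < t \<and> t < \<theta>1"
  proof (cases t \<theta>1 rule: linorder_cases)
    case less
    then show ?thesis
      using assms inner_\<gamma>_rot_pos[of t] by (cases "t = \<theta>0") (auto simp: inner_complex_def)
  next
    case equal
    then show ?thesis
      by (simp add: \<theta>1(3) inner_complex_def)
  next
    case greater
    then show ?thesis
      using assms inner_\<gamma>_rot_neg[of t] by auto
  qed
  then show ?thesis
    by (simp add: Phi_xi_def)
qed

definition partial_moment :: "(real \<Rightarrow> real) \<Rightarrow> real \<Rightarrow> complex" where
  "partial_moment u s = integral {\<theta>0..s} (\<lambda>t. u t *\<^sub>R \<gamma>' t)"

abbreviation moment :: "(real \<Rightarrow> real) \<Rightarrow> complex" where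
  "moment u \<equiv> partial_moment u (\<theta>0 + 2 * pi)"

definition integrated_field :: "(real \<Rightarrow> real) \<Rightarrow> complex \<Rightarrow> complex" where
  "integrated_field u z = partial_moment u (param z)"

lemma integrable_moment:
  "continuous_on UNIV u \<Longrightarrow> (\<lambda>t. u t *\<^sub>R \<gamma>' t) integrable_on {a..b}"
  by (intro integrable_continuous_interval continuous_intros continuous_on_\<gamma>')
    (auto elim: continuous_on_subset)

lemma partial_moment_lincomb:
  assumes "continuous_on UNIV u" "continuous_on UNIV v"
  shows "partial_moment (\<lambda>t. a * u t + b * v t) s = a *\<^sub>R partial_moment u s + b *\<^sub>R partial_moment v s"
proof -
  have eq: "(\<lambda>t. (a * u t + b * v t) *\<^sub>R \<gamma>' t) = (\<lambda>t. a *\<^sub>R (u t *\<^sub>R \<gamma>' t) + b *\<^sub>R (v t *\<^sub>R \<gamma>' t))"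
    by (simp add: fun_eq_iff scaleR_add_left)
  show ?thesis
    unfolding partial_moment_def eq
    by (simp only: integral_add[OF integrable_cmul[OF integrable_moment[OF assms(1)]]
          integrable_cmul[OF integrable_moment[OF assms(2)]]] integral_cmul)
qed

lemma partial_moment_eq_0:
  "(\<And>t. \<theta>0 \<le> t \<Longrightarrow> t \<le> s \<Longrightarrow> u t = 0) \<Longrightarrow> partial_moment u s = 0"
  unfolding partial_moment_def by (rule integral_unique[OF has_integral_is_0]) simp

lemma partial_moment_eq_moment:
  assumes "\<theta>0 \<le> s" "s \<le> \<theta>0 + 2 * pi" "continuous_on UNIV u"
    and "\<And>t. s \<le> t \<Longrightarrow> t \<le> \<theta>0 + 2 * pi \<Longrightarrow> u t = 0"
  shows "partial_moment u s = moment u"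
proof -
  have "integral {s..\<theta>0 + 2 * pi} (\<lambda>t. u t *\<^sub>R \<gamma>' t) = 0"
    using assms(4) by (intro integral_unique[OF has_integral_is_0]) simp
  then show ?thesis
    unfolding partial_moment_def
    using Henstock_Kurzweil_Integration.integral_combine[OF assms(1,2) integrable_moment[OF assms(3)]]
    by simp
qed

lemma norm_partial_moment_bump_density:
  assumes "s \<le> \<theta>0 + 2 * pi"
  shows "norm (partial_moment (bump_density e c) s) \<le> 1"
proof -
  have "norm (partial_moment (bump_density e c) s) \<le> integral {\<theta>0..\<theta>0 + 2 * pi} (bump_density e c)"
    unfolding partial_moment_def
    by (rule norm_integral_weighted_le[OF _ continuous_on_\<gamma>' _ assms])
      (simp_all add: continuous_on_subset[OF C1_periodic_continuous[OF C1_periodic_bump_density]]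
        bump_density_nonneg \<gamma>_arclength)
  then show ?thesis
    using integral_bump_density_le[of \<theta>0 e c] by linarith
qed

lemma partial_moment_periodic:
  assumes u: "C1_periodic u" and "moment u = 0" and "\<theta>0 \<le> s"
  shows "partial_moment u (s + of_nat n * (2 * pi)) = partial_moment u s"
proof (induction n)
  case (Suc n)
  define f where "f t = u t *\<^sub>R \<gamma>' t" for t
  have "continuous_on UNIV f"
    unfolding f_def by (intro continuous_intros continuous_on_\<gamma>' C1_periodic_continuous[OF u])
  moreover have "f (t + 2 * pi) = f t" for t
    using u by (simp add: f_def C1_periodic_def \<gamma>'_periodic)
  moreover have "0 \<le> of_nat n * (2 * pi)"
    by simp
  then have "\<theta>0 \<le> s + of_nat n * (2 * pi)"
    using assms(3) by linarith
  ultimately have "partial_moment u ((s + of_nat n * (2 * pi)) + 2 * pi) = partial_moment u (s + of_nat n * (2 * pi))"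
    using integral_periodic_primitive[where f = f and p = "2 * pi" and a = \<theta>0 and t = "s + of_nat n * (2 * pi)"]
      assms(2,3)
    by (simp add: partial_moment_def f_def[abs_def])
  then show ?case
    using Suc by (simp add: algebra_simps)
qed simp

lemma integrated_field_\<gamma>:
  assumes "C1_periodic u" "moment u = 0" "\<theta>0 \<le> s"
  shows "integrated_field u (\<gamma> s) = partial_moment u s"
proof -
  obtain k :: int where k: "s + of_int k * (2 * pi) \<in> {\<theta>0..<\<theta>0 + 2 * pi}"
    using ex_int_shift_in_period[of "2 * pi"] by auto
  then have "of_int k * (2 * pi) < 2 * pi"
    using assms(3) unfolding atLeastLessThan_iff by linarith
  then have "k \<le> 0"
    by simp
  define n where "n = nat (- k)"
  have s: "s = (s + of_int k * (2 * pi)) + of_nat n * (2 * pi)"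
    using \<open>k \<le> 0\<close> by (simp add: n_def algebra_simps)
  have "param (\<gamma> s) = s + of_int k * (2 * pi)"
    using param_\<gamma>[OF k] by (simp add: \<gamma>.plus_of_int)
  then show ?thesis
    unfolding integrated_field_def
    using partial_moment_periodic[OF assms(1,2), of "s + of_int k * (2 * pi)" n] k s by simp
qed

lemma has_vector_derivative_partial_moment:
  assumes "continuous_on UNIV u" "\<theta>0 < s"
  shows "(partial_moment u has_vector_derivative u s *\<^sub>R \<gamma>' s) (at s)"
proof -
  have "(partial_moment u has_vector_derivative u s *\<^sub>R \<gamma>' s) (at s within {\<theta>0..s + 1})"
    unfolding partial_moment_def[abs_def]
    by (intro integral_has_vector_derivative continuous_intros continuous_on_\<gamma>'
        continuous_on_subset[OF assms(1)]) (use assms in auto)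
  moreover have "at s within {\<theta>0..s + 1} = at s"
    by (rule at_within_interior) (use assms in auto)
  ultimately show ?thesis
    by simp
qed

lemma integrated_field_in_ENT:
  assumes u: "C1_periodic u" and "moment u = 0"
  shows "integrated_field u \<in> ENT \<gamma>"
proof -
  have "((\<lambda>s. integrated_field u (\<gamma> s)) has_vector_derivative u \<theta> *\<^sub>R \<gamma>' \<theta>) (at \<theta>)" for \<theta>
  proof (rule periodic_has_vector_derivative[where p = "2 * pi" and a = \<theta>0])
    show "((\<lambda>s. integrated_field u (\<gamma> s)) has_vector_derivative u s *\<^sub>R \<gamma>' s) (at s)" if "\<theta>0 < s" for s
      using has_vector_derivative_partial_moment[OF C1_periodic_continuous[OF u] that]
      by (rule has_vector_derivative_transform_within_open[of _ _ _ "{\<theta>0<..}"])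
        (use that integrated_field_\<gamma>[OF assms] in auto)
  qed (use u in \<open>simp_all add: C1_periodic_def \<gamma>'_periodic \<gamma>.plus_period\<close>)
  then show ?thesis
    using u unfolding ENT_def C1_periodic_def by blast
qed

lemma norm_moment_bump_density_le:
  assumes "0 < \<delta>" "\<delta> \<le> pi / 2" "\<bar>c - c0\<bar> \<le> pi / 2"
    and close: "\<And>t. \<bar>t - c0\<bar> < \<delta> + \<bar>c - c0\<bar> \<Longrightarrow> norm (\<gamma>' t - \<gamma>' c0) \<le> \<epsilon>"
  shows "norm (moment (bump_density \<delta> c) - \<gamma>' c0) \<le> \<epsilon>"
proof -
  let ?\<rho> = "bump_density \<delta> c"
  have cont_\<rho>: "continuous_on S ?\<rho>" for S
    using C1_periodic_continuous[OF C1_periodic_bump_density] continuous_on_subset by blast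
  have "moment ?\<rho> = integral {c0 - pi..c0 - pi + 2 * pi} (\<lambda>t. ?\<rho> t *\<^sub>R \<gamma>' t)"
    unfolding partial_moment_def
    using C1_periodic_bump_density[of \<delta> c]
    by (intro integral_periodic_interval continuous_intros cont_\<rho> continuous_on_\<gamma>')
      (simp_all add: C1_periodic_def \<gamma>'_periodic)
  also have "norm (\<dots> - \<gamma>' c0) \<le> \<epsilon>"
  proof (rule integral_weighted_average_close[OF cont_\<rho> continuous_on_\<gamma>' bump_density_nonneg])
    show "integral {c0 - pi..c0 - pi + 2 * pi} ?\<rho> = 1"
      using assms(1,2) by (intro integral_bump_density) auto
    fix t assume t: "t \<in> {c0 - pi..c0 - pi + 2 * pi}" and "?\<rho> t \<noteq> 0"
    moreover have "\<bar>t - c\<bar> \<le> 2 * pi - \<delta>"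
      using t assms(2,3) unfolding abs_le_iff atLeastAtMost_iff by linarith
    ultimately have "\<bar>t - c\<bar> < \<delta>"
      using bump_density_eq_0[of \<delta> t c] assms(1) by (meson less_imp_le not_le)
    then show "norm (\<gamma>' t - \<gamma>' c0) \<le> \<epsilon>"
      by (intro close) linarith
  qed
  finally show ?thesis .
qed

lemma moment_bump_density_tendsto:
  assumes "(c \<longlongrightarrow> c0) (at_right 0)"
  shows "((\<lambda>\<delta>. moment (bump_density \<delta> (c \<delta>))) \<longlongrightarrow> \<gamma>' c0) (at_right 0)"
proof (rule tendstoI)
  fix \<epsilon> :: real assume "\<epsilon> > 0"
  then obtain \<eta> where "\<eta> > 0" and \<eta>: "\<And>t. dist t c0 < \<eta> \<Longrightarrow> dist (\<gamma>' t) (\<gamma>' c0) < \<epsilon> / 2"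
    using continuous_on_\<gamma>'[of UNIV] unfolding continuous_on_iff by (metis UNIV_I half_gt_zero)
  have "eventually (\<lambda>\<delta>. dist (c \<delta>) c0 < min (\<eta> / 2) (pi / 2)) (at_right 0)"
    by (rule tendstoD[OF assms]) (use \<open>\<eta> > 0\<close> in simp)
  moreover have "eventually (\<lambda>\<delta>. 0 < \<delta> \<and> \<delta> < min (\<eta> / 2) (pi / 2)) (at_right 0)"
    using \<open>\<eta> > 0\<close> by (auto simp: eventually_at_right_field intro!: exI[of _ "min (\<eta> / 2) (pi / 2)"])
  ultimately show "eventually (\<lambda>\<delta>. dist (moment (bump_density \<delta> (c \<delta>))) (\<gamma>' c0) < \<epsilon>) (at_right 0)"
  proof eventually_elim
    case (elim \<delta>)
    have "norm (moment (bump_density \<delta> (c \<delta>)) - \<gamma>' c0) \<le> \<epsilon> / 2"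
    proof (rule norm_moment_bump_density_le)
      show "norm (\<gamma>' t - \<gamma>' c0) \<le> \<epsilon> / 2" if "\<bar>t - c0\<bar> < \<delta> + \<bar>c \<delta> - c0\<bar>" for t
        using \<eta>[of t] that elim by (simp add: dist_norm dist_real_def)
    qed (use elim in \<open>auto simp: dist_real_def\<close>)
    then show ?case
      using \<open>\<epsilon> > 0\<close> by (simp add: dist_norm)
  qed
qed

lemma ex_tangent_not_orthogonal:
  assumes "n \<noteq> 0"
  shows "\<exists>c. \<gamma>' c \<bullet> n \<noteq> 0"
proof (rule ccontr)
  assume "\<nexists>c. \<gamma>' c \<bullet> n \<noteq> 0"
  then have const: "\<gamma> s \<bullet> n = \<gamma> t \<bullet> n" for s t
    using has_real_derivative_inner_\<gamma>[of n] by (intro DERIV_isconst_all) auto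
  then have "\<xi> \<bullet> n = 0"
    using const[of \<theta>1 \<theta>0] \<theta>1(3) by simp
  define z where "z = (1 / N n) *\<^sub>R n"
  have "N z = 1"
    using N_pos[OF assms] by (simp add: z_def N_scaleR)
  then have "z \<bullet> n = 0"
    using param[of z] const[of "param z" \<theta>0] \<open>\<xi> \<bullet> n = 0\<close> by simp
  then show False
    using N_pos[OF assms] assms by (simp add: z_def)
qed

lemma ex_moment_bump_density_not_orthogonal:
  assumes "n \<noteq> 0"
  shows "\<exists>e c. moment (bump_density e c) \<bullet> n \<noteq> 0"
proof -
  obtain c where c: "\<gamma>' c \<bullet> n \<noteq> 0"
    using ex_tangent_not_orthogonal[OF assms] by blast
  have "((\<lambda>\<delta>. moment (bump_density \<delta> c) \<bullet> n) \<longlongrightarrow> \<gamma>' c \<bullet> n) (at_right 0)"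
    by (intro tendsto_inner moment_bump_density_tendsto tendsto_const)
  then have "eventually (\<lambda>\<delta>. moment (bump_density \<delta> c) \<bullet> n \<noteq> 0) (at_right 0)"
    using c by (rule tendsto_imp_eventually_ne)
  from eventually_happens[OF this] show ?thesis
    by auto
qed

lemma partial_moment_add:
  "continuous_on UNIV u \<Longrightarrow> continuous_on UNIV v \<Longrightarrow>
    partial_moment (\<lambda>t. u t + v t) s = partial_moment u s + partial_moment v s"
  using partial_moment_lincomb[of u v 1 1 s] by simp

lemma continuous_on_bump_density: "continuous_on UNIV (bump_density e c)"
  by (rule C1_periodic_continuous[OF C1_periodic_bump_density])

lemma norm_moment_bump_density: "norm (moment (bump_density e c)) \<le> 1"
  by (rule norm_partial_moment_bump_density) simp

end

section \<open>The approximating fields\<close>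

locale bump_frame = sphere_curve +
  fixes ea ca eb cb :: real
  assumes independent: "Im (cnj (moment (bump_density ea ca)) * moment (bump_density eb cb)) \<noteq> 0"

lemma (in sphere_curve) ex_bump_frame: "\<exists>ea ca eb cb. bump_frame N \<gamma> \<theta>0 ea ca eb cb"
proof -
  obtain ea ca where "moment (bump_density ea ca) \<bullet> 1 \<noteq> 0"
    using ex_moment_bump_density_not_orthogonal[of 1] by auto
  then have "\<i> * moment (bump_density ea ca) \<noteq> 0"
    by auto
  then obtain eb cb where "moment (bump_density eb cb) \<bullet> (\<i> * moment (bump_density ea ca)) \<noteq> 0"
    using ex_moment_bump_density_not_orthogonal by blast
  then have "bump_frame N \<gamma> \<theta>0 ea ca eb cb"
    by unfold_locales (simp add: inner_complex_def algebra_simps)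
  then show ?thesis
    by blast
qed

context bump_frame
begin

abbreviation Wa :: complex where
  "Wa \<equiv> moment (bump_density ea ca)"

abbreviation Wb :: complex where
  "Wb \<equiv> moment (bump_density eb cb)"

abbreviation det :: real where
  "det \<equiv> Im (cnj Wa * Wb)"

definition correction :: "complex \<Rightarrow> real \<Rightarrow> real" where
  "correction w t = Im (cnj w * Wb) / det * bump_density ea ca t + Im (cnj Wa * w) / det * bump_density eb cb t"

definition correction_bound :: real where
  "correction_bound = (norm Wa + norm Wb) / \<bar>det\<bar>"

lemma C1_periodic_correction: "C1_periodic (correction w)"
  unfolding correction_def[abs_def]
  by (intro C1_periodic_add C1_periodic_cmult C1_periodic_bump_density)

lemma partial_moment_correction:
  "partial_moment (correction w) s =
    (Im (cnj w * Wb) / det) *\<^sub>R partial_moment (bump_density ea ca) s +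
    (Im (cnj Wa * w) / det) *\<^sub>R partial_moment (bump_density eb cb) s"
  unfolding correction_def[abs_def]
  by (rule partial_moment_lincomb[OF continuous_on_bump_density continuous_on_bump_density])

lemma moment_correction: "moment (correction w) = w"
  unfolding partial_moment_correction by (rule complex_cramer[OF independent])

lemma norm_partial_moment_correction:
  assumes "s \<le> \<theta>0 + 2 * pi"
  shows "norm (partial_moment (correction w) s) \<le> correction_bound * norm w"
proof -
  define \<alpha> \<beta> where "\<alpha> = Im (cnj w * Wb) / det" and "\<beta> = Im (cnj Wa * w) / det"
  have "norm (partial_moment (correction w) s) \<le> \<bar>\<alpha>\<bar> * 1 + \<bar>\<beta>\<bar> * 1"
    unfolding partial_moment_correction \<alpha>_def[symmetric] \<beta>_def[symmetric]
    by (intro norm_triangle_le add_mono)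
      (simp_all add: mult_left_le norm_partial_moment_bump_density assms)
  also have "\<dots> \<le> norm w * norm Wb / \<bar>det\<bar> + norm Wa * norm w / \<bar>det\<bar>"
    unfolding \<alpha>_def \<beta>_def abs_divide
    using abs_Im_le_cmod[of "cnj w * Wb"] abs_Im_le_cmod[of "cnj Wa * w"]
    by (intro add_mono) (simp_all only: mult_1_right norm_mult complex_mod_cnj divide_right_mono abs_ge_zero)
  also have "\<dots> = correction_bound * norm w"
    by (simp add: correction_bound_def add_divide_distrib algebra_simps)
  finally show ?thesis .
qed

lemma correction_bound_nonneg: "0 \<le> correction_bound"
  by (simp add: correction_bound_def)

abbreviation up_bump :: "real \<Rightarrow> real \<Rightarrow> real" where
  "up_bump \<delta> \<equiv> bump_density \<delta> (\<theta>0 + 2 * \<delta>)"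

abbreviation down_bump :: "real \<Rightarrow> real \<Rightarrow> real" where
  "down_bump \<delta> \<equiv> bump_density \<delta> (\<theta>1 - 2 * \<delta>)"

abbreviation pair_moment :: "real \<Rightarrow> complex" where
  "pair_moment \<delta> \<equiv> moment (up_bump \<delta>) + moment (down_bump \<delta>)"

definition density :: "real \<Rightarrow> real \<Rightarrow> real" where
  "density \<delta> t = up_bump \<delta> t + down_bump \<delta> t + correction (- pair_moment \<delta>) t"

lemma partial_moment_density:
  "partial_moment (density \<delta>) s = partial_moment (up_bump \<delta>) s + partial_moment (down_bump \<delta>) s
     + partial_moment (correction (- pair_moment \<delta>)) s"
  unfolding density_def[abs_def]
  by (simp add: partial_moment_add continuous_on_bump_density continuous_on_add
      C1_periodic_continuous[OF C1_periodic_correction])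

lemma density_in_ENT: "integrated_field (density \<delta>) \<in> ENT \<gamma>"
proof (rule integrated_field_in_ENT)
  show "C1_periodic (density \<delta>)"
    unfolding density_def[abs_def]
    by (intro C1_periodic_add C1_periodic_bump_density C1_periodic_correction)
  show "moment (density \<delta>) = 0"
    by (simp add: partial_moment_density moment_correction)
qed

lemma norm_pair_moment: "norm (pair_moment \<delta>) \<le> 2"
  using norm_triangle_ineq[of "moment (up_bump \<delta>)" "moment (down_bump \<delta>)"]
    norm_moment_bump_density[of \<delta> "\<theta>0 + 2 * \<delta>"] norm_moment_bump_density[of \<delta> "\<theta>1 - 2 * \<delta>"]
  by linarith

lemma norm_integrated_field_density:
  assumes "N z = 1"
  shows "norm (integrated_field (density \<delta>) z) \<le> 2 + 2 * correction_bound"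
proof -
  let ?s = "param z"
  have s: "?s \<le> \<theta>0 + 2 * pi"
    using param[OF assms] by simp
  have "norm (partial_moment (correction (- pair_moment \<delta>)) ?s) \<le> correction_bound * norm (- pair_moment \<delta>)"
    by (rule norm_partial_moment_correction[OF s])
  also have "\<dots> \<le> correction_bound * 2"
    unfolding norm_minus_cancel by (rule mult_left_mono[OF norm_pair_moment correction_bound_nonneg])
  finally show ?thesis
    unfolding integrated_field_def partial_moment_density
    using norm_partial_moment_bump_density[OF s, of \<delta> "\<theta>0 + 2 * \<delta>"]
      norm_partial_moment_bump_density[OF s, of \<delta> "\<theta>1 - 2 * \<delta>"]
      norm_triangle_ineq[of "partial_moment (up_bump \<delta>) ?s" "partial_moment (down_bump \<delta>) ?s"]
      norm_triangle_ineq[of "partial_moment (up_bump \<delta>) ?s + partial_moment (down_bump \<delta>) ?s"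
        "partial_moment (correction (- pair_moment \<delta>)) ?s"]
    by linarith
qed

lemma eventually_partial_moment_up_bump:
  assumes "\<theta>0 < s" "s \<le> \<theta>0 + 2 * pi"
  shows "eventually (\<lambda>\<delta>. partial_moment (up_bump \<delta>) s = moment (up_bump \<delta>)) (at_right 0)"
proof (rule eventually_at_rightI[where b = "min ((s - \<theta>0) / 3) pi"])
  fix \<delta> :: real assume \<delta>: "\<delta> \<in> {0<..<min ((s - \<theta>0) / 3) pi}"
  show "partial_moment (up_bump \<delta>) s = moment (up_bump \<delta>)"
  proof (rule partial_moment_eq_moment[OF _ assms(2) continuous_on_bump_density])
    show "up_bump \<delta> t = 0" if "s \<le> t" "t \<le> \<theta>0 + 2 * pi" for t
      using \<delta> that by (intro bump_density_eq_0) auto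
  qed (use assms in simp)
qed (use assms in simp)

lemma eventually_partial_moment_down_bump_0:
  assumes "s < \<theta>1"
  shows "eventually (\<lambda>\<delta>. partial_moment (down_bump \<delta>) s = 0) (at_right 0)"
proof (rule eventually_at_rightI[where b = "min ((\<theta>1 - s) / 3) pi"])
  fix \<delta> :: real assume \<delta>: "\<delta> \<in> {0<..<min ((\<theta>1 - s) / 3) pi}"
  show "partial_moment (down_bump \<delta>) s = 0"
  proof (rule partial_moment_eq_0)
    show "down_bump \<delta> t = 0" if "\<theta>0 \<le> t" "t \<le> s" for t
      using \<delta> that \<theta>1 by (intro bump_density_eq_0) auto
  qed
qed (use assms in simp)

lemma eventually_partial_moment_down_bump:
  assumes "\<theta>1 \<le> s" "s \<le> \<theta>0 + 2 * pi"
  shows "eventually (\<lambda>\<delta>. partial_moment (down_bump \<delta>) s = moment (down_bump \<delta>)) (at_right 0)"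
proof (rule eventually_at_rightI[where b = "(\<theta>1 - \<theta>0) / 3"])
  fix \<delta> :: real assume \<delta>: "\<delta> \<in> {0<..<(\<theta>1 - \<theta>0) / 3}"
  show "partial_moment (down_bump \<delta>) s = moment (down_bump \<delta>)"
  proof (rule partial_moment_eq_moment[OF _ assms(2) continuous_on_bump_density])
    show "down_bump \<delta> t = 0" if "s \<le> t" "t \<le> \<theta>0 + 2 * pi" for t
      using \<delta> that assms by (intro bump_density_eq_0) auto
  qed (use assms \<theta>1 in simp)
qed (use \<theta>1 in simp)

lemma moment_up_bump_tendsto: "((\<lambda>\<delta>. moment (up_bump \<delta>)) \<longlongrightarrow> \<gamma>' \<theta>0) (at_right 0)"
  by (rule moment_bump_density_tendsto) (auto intro!: tendsto_eq_intros)

lemma moment_down_bump_tendsto: "((\<lambda>\<delta>. moment (down_bump \<delta>)) \<longlongrightarrow> - \<gamma>' \<theta>0) (at_right 0)"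
  unfolding \<gamma>'_antipode[symmetric]
  by (rule moment_bump_density_tendsto) (auto intro!: tendsto_eq_intros)

lemma partial_moment_up_bump_tendsto:
  assumes "s \<in> {\<theta>0..\<theta>0 + 2 * pi}"
  shows "((\<lambda>\<delta>. partial_moment (up_bump \<delta>) s) \<longlongrightarrow> (if \<theta>0 < s then \<gamma>' \<theta>0 else 0)) (at_right 0)"
proof (cases "\<theta>0 < s")
  case True
  then have "eventually (\<lambda>\<delta>. moment (up_bump \<delta>) = partial_moment (up_bump \<delta>) s) (at_right 0)"
    using assms eventually_partial_moment_up_bump[of s] by (auto elim: eventually_mono)
  then show ?thesis
    using True Lim_transform_eventually[OF moment_up_bump_tendsto] by simp
next
  case False
  then have "s = \<theta>0"
    using assms by simp
  then show ?thesis
    by (simp add: partial_moment_def)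
qed

lemma partial_moment_down_bump_tendsto:
  assumes "s \<le> \<theta>0 + 2 * pi"
  shows "((\<lambda>\<delta>. partial_moment (down_bump \<delta>) s) \<longlongrightarrow> (if \<theta>1 \<le> s then - \<gamma>' \<theta>0 else 0)) (at_right 0)"
proof (cases "\<theta>1 \<le> s")
  case True
  then have "eventually (\<lambda>\<delta>. moment (down_bump \<delta>) = partial_moment (down_bump \<delta>) s) (at_right 0)"
    using assms eventually_partial_moment_down_bump[of s] by (auto elim: eventually_mono)
  then show ?thesis
    using True Lim_transform_eventually[OF moment_down_bump_tendsto] by simp
next
  case False
  then show ?thesis
    using tendsto_eventually[OF eventually_partial_moment_down_bump_0[of s]] by simp
qed

lemma partial_moment_correction_tendsto:
  assumes "s \<le> \<theta>0 + 2 * pi"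
  shows "((\<lambda>\<delta>. partial_moment (correction (- pair_moment \<delta>)) s) \<longlongrightarrow> 0) (at_right 0)"
proof (rule Lim_null_comparison[OF always_eventually])
  show "\<forall>\<delta>. norm (partial_moment (correction (- pair_moment \<delta>)) s)
      \<le> correction_bound * norm (- pair_moment \<delta>)"
    using norm_partial_moment_correction[OF assms] by blast
  have "((\<lambda>\<delta>. - pair_moment \<delta>) \<longlongrightarrow> 0) (at_right 0)"
    using tendsto_minus[OF tendsto_add[OF moment_up_bump_tendsto moment_down_bump_tendsto]] by simp
  then show "((\<lambda>\<delta>. correction_bound * norm (- pair_moment \<delta>)) \<longlongrightarrow> 0) (at_right 0)"
    by (intro tendsto_mult_right_zero tendsto_norm_zero)
qed

lemma integrated_field_density_tendsto:
  assumes "N z = 1"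
  shows "((\<lambda>\<delta>. integrated_field (density \<delta>) z) \<longlongrightarrow> Phi_xi \<gamma> \<theta>0 z) (at_right 0)"
proof -
  let ?s = "param z"
  have s: "?s \<in> {\<theta>0..<\<theta>0 + 2 * pi}" "\<gamma> ?s = z"
    using param[OF assms] by simp_all
  have "((\<lambda>\<delta>. integrated_field (density \<delta>) z) \<longlongrightarrow>
      (if \<theta>0 < ?s then \<gamma>' \<theta>0 else 0) + (if \<theta>1 \<le> ?s then - \<gamma>' \<theta>0 else 0) + 0) (at_right 0)"
    unfolding integrated_field_def partial_moment_density
    using s(1) by (intro tendsto_add partial_moment_up_bump_tendsto partial_moment_down_bump_tendsto
        partial_moment_correction_tendsto) auto
  moreover have "(if \<theta>0 < ?s then \<gamma>' \<theta>0 else 0) + (if \<theta>1 \<le> ?s then - \<gamma>' \<theta>0 else 0) + 0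
      = Phi_xi \<gamma> \<theta>0 z"
    using Phi_xi_\<gamma>[OF s(1)] s(2) \<theta>1(1) by auto
  ultimately show ?thesis
    by simp
qed

end

theorem lemma3p3:
  fixes N :: "complex \<Rightarrow> real" and \<gamma> :: "real \<Rightarrow> complex" and \<theta>0 :: real
  assumes norm: "strictly_convex_norm N"
    and C1: "C1_away_from_origin N"
    and \<gamma>_diff: "\<forall>\<theta>. \<gamma> differentiable (at \<theta>)"
    and \<gamma>_C1: "continuous_on UNIV (\<lambda>\<theta>. vector_derivative \<gamma> (at \<theta>))"
    and \<gamma>_arclength: "\<forall>\<theta>. norm (vector_derivative \<gamma> (at \<theta>)) = 1"
    and \<gamma>_periodic: "\<forall>\<theta>. \<gamma> (\<theta> + 2 * pi) = \<gamma> \<theta>"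
    and \<gamma>_bij: "bij_betw \<gamma> {0..<2 * pi} {z. N z = 1}"
    and \<gamma>_ccw: "\<forall>\<theta>. Im (cnj (\<gamma> \<theta>) * vector_derivative \<gamma> (at \<theta>)) > 0"
  shows "\<exists>(\<Phi> :: real \<Rightarrow> complex \<Rightarrow> complex) (M :: real).
           (\<forall>\<delta>>0. \<Phi> \<delta> \<in> ENT \<gamma> \<and> (\<forall>z. N z = 1 \<longrightarrow> norm (\<Phi> \<delta> z) \<le> M)) \<and>
           (\<forall>z. N z = 1 \<longrightarrow> ((\<lambda>\<delta>. \<Phi> \<delta> z) \<longlongrightarrow> Phi_xi \<gamma> \<theta>0 z) (at_right 0))"
proof -
  interpret sphere_curve N \<gamma> \<theta>0
    using assms by unfold_locales (simp_all add: strictly_convex_norm_def)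
  obtain ea ca eb cb where "bump_frame N \<gamma> \<theta>0 ea ca eb cb"
    using ex_bump_frame by blast
  then interpret bump_frame N \<gamma> \<theta>0 ea ca eb cb .
  show ?thesis
    using density_in_ENT norm_integrated_field_density integrated_field_density_tendsto
    by (intro exI[of _ "\<lambda>\<delta>. integrated_field (density \<delta>)"] exI[of _ "2 + 2 * correction_bound"]) simp
qed

end
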